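(* Let $(B,\mathscr O)$ be a brace block with $B$ finite. Then for all $\circ,\star\in\mathscr O$, every Galois field extension $L/K$ whose Galois group is isomorphic to $(B,\circ)$ admits a Hopf–Galois structure of type $(B,\star)$.
   Context: A skew left brace is a triple $(B,\cdot,\circ)$ where $(B,\cdot),(B,\circ)$ are groups and $a\circ(b\cdot c)=(a\circ b)\cdot a^{-1}\cdot(a\circ c)$ for all $a,b,c\in B$, with $a^{-1}$ the inverse in $(B,\cdot)$. A brace block is a set $B$ with a collection $\mathscr O$ of binary operations on $B$ such that $(B,\circ,\star)$ is a skew left brace for every $\circ,\star\in\mathscr O$. For a finite Galois extension $L/K$ with group $\Gamma$, a Hopf–Galois structure of type $N$ is (by Greither–Pareigis) one arising as $L[N']^{\Gamma}$ from a regular subgroup $N'\le\operatorname{Perm}(\Gamma)$ isomorphic to $N$ and normalized by the left regular representation $\lambda(\Gamma)$; equivalently a $K$-Hopf algebra $H$ acting on $L$ making $L/K$ an $H$-Hopf–Galois extension with $L\otimes_K H\cong L[N]$. *)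

theory Defs
  imports "HOL-Algebra.Algebra"
begin

text \<open>The group structure on a set B given by a binary operation f
  (the identity is the unique two-sided neutral element, if any).\<close>
definition op_group :: "'b set \<Rightarrow> ('b \<Rightarrow> 'b \<Rightarrow> 'b) \<Rightarrow> 'b monoid" where
  "op_group B f = \<lparr>carrier = B, monoid.mult = f,
     one = (THE e. e \<in> B \<and> (\<forall>x\<in>B. f e x = x \<and> f x e = x))\<rparr>"

definition skew_left_brace :: "'b set \<Rightarrow> ('b \<Rightarrow> 'b \<Rightarrow> 'b) \<Rightarrow> ('b \<Rightarrow> 'b \<Rightarrow> 'b) \<Rightarrow> bool" where
  "skew_left_brace B dot circ \<longleftrightarrow>
     group (op_group B dot) \<and> group (op_group B circ) \<and>
     (\<forall>a\<in>B. \<forall>b\<in>B. \<forall>c\<in>B.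
        circ a (dot b c) = dot (dot (circ a b) (inv\<^bsub>op_group B dot\<^esub> a)) (circ a c))"

definition brace_block :: "'b set \<Rightarrow> ('b \<Rightarrow> 'b \<Rightarrow> 'b) set \<Rightarrow> bool" where
  "brace_block B Ops \<longleftrightarrow> (\<forall>f\<in>Ops. \<forall>g\<in>Ops. skew_left_brace B f g)"

definition gal_auts :: "('a, 'c) ring_scheme \<Rightarrow> 'a set \<Rightarrow> ('a \<Rightarrow> 'a) set" where
  "gal_auts L K = {\<sigma>. \<sigma> \<in> ring_iso L L \<and> \<sigma> \<in> extensional (carrier L) \<and> (\<forall>k\<in>K. \<sigma> k = k)}"

definition Gal :: "('a, 'c) ring_scheme \<Rightarrow> 'a set \<Rightarrow> ('a \<Rightarrow> 'a) monoid" where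
  "Gal L K = \<lparr>carrier = gal_auts L K, monoid.mult = (\<lambda>\<sigma> \<tau>. compose (carrier L) \<sigma> \<tau>),
              one = (\<lambda>x\<in>carrier L. x)\<rparr>"

definition galois_ext :: "('a, 'c) ring_scheme \<Rightarrow> 'a set \<Rightarrow> bool" where
  "galois_ext L K \<longleftrightarrow> field L \<and> subfield K L \<and> ring.finite_dimension L K (carrier L) \<and>
     {x \<in> carrier L. \<forall>\<sigma>\<in>gal_auts L K. \<sigma> x = x} = K"

definition left_reg :: "('g, 'm) monoid_scheme \<Rightarrow> 'g \<Rightarrow> ('g \<Rightarrow> 'g)" where
  "left_reg G g = (\<lambda>x\<in>carrier G. g \<otimes>\<^bsub>G\<^esub> x)"

definition regular_normalized_subgroup :: "('g, 'm) monoid_scheme \<Rightarrow> ('g \<Rightarrow> 'g) set \<Rightarrow> bool" where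
  "regular_normalized_subgroup G N' \<longleftrightarrow>
     subgroup N' (BijGroup (carrier G)) \<and>
     (\<forall>x\<in>carrier G. \<forall>y\<in>carrier G. \<exists>!\<eta>. \<eta> \<in> N' \<and> \<eta> x = y) \<and>
     (\<forall>g\<in>carrier G. \<forall>\<eta>\<in>N'.
        left_reg G g \<otimes>\<^bsub>BijGroup (carrier G)\<^esub> \<eta> \<otimes>\<^bsub>BijGroup (carrier G)\<^esub>
          inv\<^bsub>BijGroup (carrier G)\<^esub> (left_reg G g) \<in> N')"

text \<open>The Galois extension L/K (with group Gamma = Gal(L/K)) admits a Hopf--Galois
  structure of type N, in the Greither--Pareigis description.\<close>
definition has_HGS_of_type :: "('a, 'c) ring_scheme \<Rightarrow> 'a set \<Rightarrow> ('n, 'd) monoid_scheme \<Rightarrow> bool" where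
  "has_HGS_of_type L K N \<longleftrightarrow>
     (\<exists>N'. regular_normalized_subgroup (Gal L K) N' \<and>
           (BijGroup (carrier (Gal L K)))\<lparr>carrier := N'\<rparr> \<cong> N)"

end

theory Submission
  imports Defs
begin

(* Write C = (B, circ) and D = (B, star). The brace identity says exactly that conjugating the
   left translation y \<mapsto> a star y of D by the left translation of C by c gives the D-translation
   by (c circ a) star c^-1, the inverse taken in D. So the image of D under its Cayley embedding
   into Perm(B) is a regular subgroup isomorphic to D and normalized by the left regular
   representation of C. Transporting Perm(B) to Perm(Gal(L/K)) along an isomorphism
   Gal(L/K) -> C carries left translations of C to those of Gal(L/K), and the Greither-Pareigis
   correspondence turns the transported subgroup into a Hopf-Galois structure of type D. *)

lemma op_group_simps [simp]:
  "carrier (op_group B f) = B" "monoid.mult (op_group B f) = f"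
  by (simp_all add: op_group_def)

lemma BijGroup_mult: "f \<in> Bij S \<Longrightarrow> g \<in> Bij S \<Longrightarrow> f \<otimes>\<^bsub>BijGroup S\<^esub> g = compose S f g"
  by (simp add: BijGroup_def)

lemma gal_auts_funcset: "\<sigma> \<in> gal_auts L K \<Longrightarrow> \<sigma> \<in> carrier L \<rightarrow> carrier L"
  unfolding gal_auts_def using ring_iso_memE(1) by fastforce

lemma gal_auts_compose:
  assumes "ring L" "\<sigma> \<in> gal_auts L K" "\<tau> \<in> gal_auts L K"
  shows "compose (carrier L) \<sigma> \<tau> \<in> gal_auts L K"
proof -
  have "\<sigma> \<circ> \<tau> \<in> ring_iso L L"
    using assms(2,3) ring_iso_set_trans unfolding gal_auts_def by blast
  then have "compose (carrier L) \<sigma> \<tau> \<in> ring_iso L L"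
    by (rule ring.ring_iso_restrict[OF assms(1)]) (simp add: compose_def)
  moreover have "\<forall>k\<in>K. compose (carrier L) \<sigma> \<tau> k = k"
    using assms(2,3) by (auto simp: gal_auts_def compose_def extensional_def)
  ultimately show ?thesis unfolding gal_auts_def by simp
qed

lemma id_gal_auts:
  assumes "ring L" "K \<subseteq> carrier L"
  shows "(\<lambda>x\<in>carrier L. x) \<in> gal_auts L K"
proof -
  have "(\<lambda>x\<in>carrier L. x) \<in> ring_iso L L"
    by (rule ring.ring_iso_restrict[OF assms(1) ring_iso_set_refl]) simp
  then show ?thesis using assms(2) unfolding gal_auts_def by auto
qed

lemma monoid_Gal:
  assumes "ring L" "K \<subseteq> carrier L"
  shows "monoid (Gal L K)"
proof (rule monoidI, simp_all add: Gal_def)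
  show "(\<lambda>x\<in>carrier L. x) \<in> gal_auts L K"
    using id_gal_auts[OF assms] .
  fix \<sigma> \<tau> \<upsilon> assume \<sigma>: "\<sigma> \<in> gal_auts L K" and \<tau>: "\<tau> \<in> gal_auts L K"
  show "compose (carrier L) \<sigma> \<tau> \<in> gal_auts L K"
    using gal_auts_compose[OF assms(1) \<sigma> \<tau>] .
  show "compose (carrier L) (\<lambda>x\<in>carrier L. x) \<sigma> = \<sigma>" "compose (carrier L) \<sigma> (\<lambda>x\<in>carrier L. x) = \<sigma>"
    using \<sigma> gal_auts_funcset[OF \<sigma>] by (simp_all add: gal_auts_def Id_compose compose_Id)
  assume "\<upsilon> \<in> gal_auts L K"
  then show "compose (carrier L) (compose (carrier L) \<sigma> \<tau>) \<upsilon> =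
      compose (carrier L) \<sigma> (compose (carrier L) \<tau> \<upsilon>)"
    using compose_assoc gal_auts_funcset by metis
qed

lemma (in group) left_reg_Bij: "g \<in> carrier G \<Longrightarrow> left_reg G g \<in> Bij (carrier G)"
  unfolding left_reg_def Bij_def
  by (auto intro!: bij_betw_byWitness[where f'="\<lambda>x. inv g \<otimes> x"] simp: m_assoc[symmetric])

lemma (in group) left_reg_hom: "left_reg G \<in> hom G (BijGroup (carrier G))"
proof (rule homI)
  show "left_reg G g \<in> carrier (BijGroup (carrier G))" if "g \<in> carrier G" for g
    using left_reg_Bij[OF that] by (simp add: BijGroup_def)
  show "left_reg G (g \<otimes> h) = left_reg G g \<otimes>\<^bsub>BijGroup (carrier G)\<^esub> left_reg G h"
    if "g \<in> carrier G" "h \<in> carrier G" for g h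
    using that left_reg_Bij by (auto simp: BijGroup_def compose_def left_reg_def m_assoc)
qed

lemma (in group) group_hom_left_reg: "group_hom G (BijGroup (carrier G)) (left_reg G)"
  using left_reg_hom group_BijGroup by (simp add: group_hom_def group_hom_axioms_def is_group)

lemma (in group) inj_on_left_reg: "inj_on (left_reg G) (carrier G)"
proof
  fix g h assume "g \<in> carrier G" "h \<in> carrier G" "left_reg G g = left_reg G h"
  then have "left_reg G g \<one> = left_reg G h \<one>" by simp
  with \<open>g \<in> carrier G\<close> \<open>h \<in> carrier G\<close> show "g = h" by (simp add: left_reg_def)
qed

lemma (in group) Cayley_iso:
  "BijGroup (carrier G)\<lparr>carrier := left_reg G ` carrier G\<rparr> \<cong> G"
proof -
  have "left_reg G \<in> iso G (BijGroup (carrier G)\<lparr>carrier := left_reg G ` carrier G\<rparr>)"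
    using left_reg_hom inj_on_left_reg by (auto simp: iso_def hom_def bij_betw_def)
  then show ?thesis using iso_sym is_isoI by blast
qed

lemma (in group) left_reg_regular:
  assumes "x \<in> carrier G" "y \<in> carrier G"
  shows "\<exists>!\<eta>. \<eta> \<in> left_reg G ` carrier G \<and> \<eta> x = y"
proof
  show "left_reg G (y \<otimes> inv x) \<in> left_reg G ` carrier G \<and> left_reg G (y \<otimes> inv x) x = y"
    using assms by (simp add: left_reg_def m_assoc)
  fix \<eta> assume "\<eta> \<in> left_reg G ` carrier G \<and> \<eta> x = y"
  then obtain g where "g \<in> carrier G" "\<eta> = left_reg G g" "y = g \<otimes> x"
    using assms(1) by (auto simp: left_reg_def)
  then show "\<eta> = left_reg G (y \<otimes> inv x)"
    using assms by (simp add: m_assoc)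
qed

lemma skew_left_brace_conj_left_reg:
  assumes brace: "skew_left_brace B star circ" and a: "a \<in> B" and c: "c \<in> B"
  shows "left_reg (op_group B circ) c \<otimes>\<^bsub>BijGroup B\<^esub> left_reg (op_group B star) a
           \<otimes>\<^bsub>BijGroup B\<^esub> inv\<^bsub>BijGroup B\<^esub> left_reg (op_group B circ) c
         = left_reg (op_group B star) (star (circ c a) (inv\<^bsub>op_group B star\<^esub> c))"
proof -
  interpret C: group "op_group B circ" using brace by (simp add: skew_left_brace_def)
  interpret D: group "op_group B star" using brace by (simp add: skew_left_brace_def)
  let ?c' = "inv\<^bsub>op_group B circ\<^esub> c"
  have c': "?c' \<in> B" using C.inv_closed c by simp
  have "inv\<^bsub>BijGroup B\<^esub> left_reg (op_group B circ) c = left_reg (op_group B circ) ?c'"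
    using group_hom.hom_inv[OF C.group_hom_left_reg] c by simp
  moreover have "circ c (star a (circ ?c' y)) = star (star (circ c a) (inv\<^bsub>op_group B star\<^esub> c)) y"
    if y: "y \<in> B" for y
  proof -
    have "circ c (star a (circ ?c' y))
        = star (star (circ c a) (inv\<^bsub>op_group B star\<^esub> c)) (circ c (circ ?c' y))"
      using brace a c c' y C.m_closed by (simp add: skew_left_brace_def)
    also have "circ c (circ ?c' y) = y"
      using C.m_assoc[of c ?c' y] C.r_inv[of c] C.l_one[of y] c c' y by simp
    finally show ?thesis .
  qed
  then have "compose B (compose B (left_reg (op_group B circ) c) (left_reg (op_group B star) a))
      (left_reg (op_group B circ) ?c')
    = left_reg (op_group B star) (star (circ c a) (inv\<^bsub>op_group B star\<^esub> c))"
    using a c c' C.m_closed D.m_closed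
    by (intro extensionalityI[where A=B]) (simp_all add: compose_eq left_reg_def)
  ultimately show ?thesis
    using C.left_reg_Bij D.left_reg_Bij a c c' by (simp add: BijGroup_mult compose_Bij)
qed

lemma skew_left_brace_regular_normalized_subgroup:
  assumes brace: "skew_left_brace B star circ"
  shows "regular_normalized_subgroup (op_group B circ) (left_reg (op_group B star) ` B)"
proof -
  interpret C: group "op_group B circ" using brace by (simp add: skew_left_brace_def)
  interpret D: group "op_group B star" using brace by (simp add: skew_left_brace_def)
  have "subgroup (left_reg (op_group B star) ` B) (BijGroup B)"
    using group_hom.img_is_subgroup[OF D.group_hom_left_reg] by simp
  moreover have "\<forall>x\<in>B. \<forall>y\<in>B. \<exists>!\<eta>. \<eta> \<in> left_reg (op_group B star) ` B \<and> \<eta> x = y"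
    using D.left_reg_regular by simp
  moreover have "left_reg (op_group B circ) c \<otimes>\<^bsub>BijGroup B\<^esub> \<eta>
           \<otimes>\<^bsub>BijGroup B\<^esub> inv\<^bsub>BijGroup B\<^esub> left_reg (op_group B circ) c
         \<in> left_reg (op_group B star) ` B"
    if c: "c \<in> B" and \<eta>: "\<eta> \<in> left_reg (op_group B star) ` B" for c \<eta>
  proof -
    obtain a where a: "a \<in> B" "\<eta> = left_reg (op_group B star) a" using \<eta> by blast
    have "circ c a \<in> B" using C.m_closed a c by simp
    then show ?thesis
      using skew_left_brace_conj_left_reg[OF brace a(1) c] a(2) c D.m_closed D.inv_closed by simp
  qed
  ultimately show ?thesis by (simp add: regular_normalized_subgroup_def)
qed

definition bij_transfer :: "'a set \<Rightarrow> ('a \<Rightarrow> 'b) \<Rightarrow> ('b \<Rightarrow> 'b) \<Rightarrow> 'a \<Rightarrow> 'a" where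
  "bij_transfer S \<phi> f = (\<lambda>x\<in>S. inv_into S \<phi> (f (\<phi> x)))"

lemma bij_transfer_Bij:
  assumes \<phi>: "bij_betw \<phi> S T" and f: "f \<in> Bij T"
  shows "bij_transfer S \<phi> f \<in> Bij S"
proof -
  have "bij_betw (inv_into S \<phi> \<circ> f \<circ> \<phi>) S S"
    using f by (auto simp: Bij_def intro: bij_betw_trans \<phi> bij_betw_inv_into)
  then show ?thesis
    unfolding Bij_def bij_transfer_def by (auto cong: bij_betw_cong)
qed

lemma bij_transfer_compose:
  assumes \<phi>: "bij_betw \<phi> S T" and g: "g \<in> T \<rightarrow> T"
  shows "bij_transfer S \<phi> (compose T f g) = compose S (bij_transfer S \<phi> f) (bij_transfer S \<phi> g)"
proof (rule extensionalityI[where A=S])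
  fix x assume x: "x \<in> S"
  have "g (\<phi> x) \<in> T" using g x bij_betwE[OF \<phi>] by blast
  moreover have "inv_into S \<phi> (g (\<phi> x)) \<in> S" if "g (\<phi> x) \<in> T"
    using that \<phi> by (meson bij_betwE bij_betw_inv_into)
  ultimately show "bij_transfer S \<phi> (compose T f g) x
      = compose S (bij_transfer S \<phi> f) (bij_transfer S \<phi> g) x"
    using x bij_betwE[OF \<phi>] bij_betw_inv_into_right[OF \<phi>] by (simp add: bij_transfer_def compose_eq)
qed (simp_all add: bij_transfer_def)

lemma inj_on_bij_transfer:
  assumes \<phi>: "bij_betw \<phi> S T"
  shows "inj_on (bij_transfer S \<phi>) (Bij T)"
proof
  fix f g assume f: "f \<in> Bij T" and g: "g \<in> Bij T"
    and eq: "bij_transfer S \<phi> f = bij_transfer S \<phi> g"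
  have "f y = g y" if y: "y \<in> T" for y
  proof -
    have "inv_into S \<phi> y \<in> S" using \<phi> y by (meson bij_betwE bij_betw_inv_into)
    then have "inv_into S \<phi> (f y) = inv_into S \<phi> (g y)"
      using fun_cong[OF eq, of "inv_into S \<phi> y"] y bij_betw_inv_into_right[OF \<phi>]
      by (simp add: bij_transfer_def)
    then show ?thesis
      using bij_betw_inv_into_right[OF \<phi>] f g y Bij_imp_funcset by (metis funcset_mem)
  qed
  then show "f = g" using f g by (auto simp: Bij_def intro: extensionalityI)
qed

lemma bij_transfer_image_Bij:
  assumes \<phi>: "bij_betw \<phi> S T"
  shows "bij_transfer S \<phi> ` Bij T = Bij S"
proof
  show "bij_transfer S \<phi> ` Bij T \<subseteq> Bij S" using bij_transfer_Bij[OF \<phi>] by blast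
  show "Bij S \<subseteq> bij_transfer S \<phi> ` Bij T"
  proof
    fix h assume h: "h \<in> Bij S"
    let ?f = "\<lambda>y\<in>T. \<phi> (h (inv_into S \<phi> y))"
    have "bij_betw (\<phi> \<circ> h \<circ> inv_into S \<phi>) T T"
      using h by (auto simp: Bij_def intro: bij_betw_trans \<phi> bij_betw_inv_into)
    then have "?f \<in> Bij T"
      unfolding Bij_def by (auto cong: bij_betw_cong)
    moreover have "bij_transfer S \<phi> ?f = h"
      using h bij_betwE[OF \<phi>] bij_betw_inv_into_left[OF \<phi>] Bij_imp_funcset[OF h]
      by (intro extensionalityI[where A=S]) (auto simp: bij_transfer_def Bij_def)
    ultimately show "h \<in> bij_transfer S \<phi> ` Bij T" by (metis image_eqI)
  qed
qed

lemma bij_transfer_iso: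
  assumes \<phi>: "bij_betw \<phi> S T"
  shows "bij_transfer S \<phi> \<in> iso (BijGroup T) (BijGroup S)"
proof (rule isoI)
  show "bij_transfer S \<phi> \<in> hom (BijGroup T) (BijGroup S)"
    using bij_transfer_Bij[OF \<phi>] compose_Bij
    by (intro homI) (simp_all add: BijGroup_def bij_transfer_compose[OF \<phi> Bij_imp_funcset])
  show "bij_betw (bij_transfer S \<phi>) (carrier (BijGroup T)) (carrier (BijGroup S))"
    using inj_on_bij_transfer[OF \<phi>] bij_transfer_image_Bij[OF \<phi>]
    by (simp add: bij_betw_def BijGroup_def)
qed

lemma BijGroup_subgroup_bij_transfer_iso:
  assumes \<phi>: "bij_betw \<phi> S T" and N: "subgroup N (BijGroup T)"
  shows "BijGroup S\<lparr>carrier := bij_transfer S \<phi> ` N\<rparr> \<cong> BijGroup T\<lparr>carrier := N\<rparr>"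
proof -
  have "restrict (bij_transfer S \<phi>) N
      \<in> iso (BijGroup T\<lparr>carrier := N\<rparr>) (BijGroup S\<lparr>carrier := bij_transfer S \<phi> ` N\<rparr>)"
    using iso_restrict[OF bij_transfer_iso[OF \<phi>] group_BijGroup group_BijGroup N] .
  then show ?thesis
    using group.iso_sym[OF group.subgroup_imp_group[OF group_BijGroup N]] is_isoI by blast
qed

lemma bij_transfer_eq_iff:
  assumes \<phi>: "bij_betw \<phi> S T" and f: "f \<in> T \<rightarrow> T" and x: "x \<in> S" and y: "y \<in> S"
  shows "bij_transfer S \<phi> f x = y \<longleftrightarrow> f (\<phi> x) = \<phi> y"
proof -
  have "f (\<phi> x) \<in> T" using f x bij_betwE[OF \<phi>] by blast
  then show ?thesis
    using x bij_betw_inv_into_left[OF \<phi> y] bij_betw_inv_into_right[OF \<phi>]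
    by (auto simp: bij_transfer_def)
qed

lemma bij_transfer_regular:
  assumes \<phi>: "bij_betw \<phi> S T" and N: "N \<subseteq> Bij T"
    and reg: "\<forall>x\<in>T. \<forall>y\<in>T. \<exists>!\<eta>. \<eta> \<in> N \<and> \<eta> x = y"
    and x: "x \<in> S" and y: "y \<in> S"
  shows "\<exists>!\<eta>. \<eta> \<in> bij_transfer S \<phi> ` N \<and> \<eta> x = y"
proof -
  have eq_iff: "bij_transfer S \<phi> \<theta> x = y \<longleftrightarrow> \<theta> (\<phi> x) = \<phi> y" if "\<theta> \<in> N" for \<theta>
    using bij_transfer_eq_iff[OF \<phi> _ x y] that N Bij_imp_funcset by blast
  obtain \<eta> where \<eta>: "\<eta> \<in> N" "\<eta> (\<phi> x) = \<phi> y"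
    and unique: "\<And>\<eta>'. \<eta>' \<in> N \<Longrightarrow> \<eta>' (\<phi> x) = \<phi> y \<Longrightarrow> \<eta>' = \<eta>"
    using reg bij_betwE[OF \<phi>] x y by metis
  show ?thesis
  proof (rule ex1I[of _ "bij_transfer S \<phi> \<eta>"])
    show "bij_transfer S \<phi> \<eta> \<in> bij_transfer S \<phi> ` N \<and> bij_transfer S \<phi> \<eta> x = y"
      using \<eta> eq_iff by blast
    fix \<eta>' assume "\<eta>' \<in> bij_transfer S \<phi> ` N \<and> \<eta>' x = y"
    then show "\<eta>' = bij_transfer S \<phi> \<eta>" using eq_iff unique by blast
  qed
qed

lemma left_reg_bij_transfer:
  assumes G: "monoid G" and \<phi>: "\<phi> \<in> iso G H" and g: "g \<in> carrier G"
  shows "left_reg G g = bij_transfer (carrier G) \<phi> (left_reg H (\<phi> g))"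
proof (rule extensionalityI[where A="carrier G"])
  fix x assume x: "x \<in> carrier G"
  have "\<phi> (g \<otimes>\<^bsub>G\<^esub> x) = \<phi> g \<otimes>\<^bsub>H\<^esub> \<phi> x"
    using \<phi> g x by (simp add: iso_def hom_mult)
  moreover have "inv_into (carrier G) \<phi> (\<phi> (g \<otimes>\<^bsub>G\<^esub> x)) = g \<otimes>\<^bsub>G\<^esub> x"
    using \<phi> bij_betw_inv_into_left monoid.m_closed[OF G g x] by (fastforce simp: iso_def)
  ultimately show "left_reg G g x = bij_transfer (carrier G) \<phi> (left_reg H (\<phi> g)) x"
    using \<phi> g x by (auto simp: left_reg_def bij_transfer_def iso_def hom_def)
qed (simp_all add: left_reg_def bij_transfer_def)

lemma regular_normalized_subgroup_bij_transfer:
  assumes G: "monoid G" and H: "group H" and \<phi>: "\<phi> \<in> iso G H"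
    and N: "regular_normalized_subgroup H N"
  shows "regular_normalized_subgroup G (bij_transfer (carrier G) \<phi> ` N)"
proof -
  let ?\<tau> = "bij_transfer (carrier G) \<phi>"
  have bij: "bij_betw \<phi> (carrier G) (carrier H)" using \<phi> by (simp add: iso_def)
  interpret \<tau>: group_hom "BijGroup (carrier H)" "BijGroup (carrier G)" ?\<tau>
    using bij_transfer_iso[OF bij]
    by (simp add: group_hom_def group_hom_axioms_def iso_def group_BijGroup)
  have sub: "subgroup N (BijGroup (carrier H))"
    and reg: "\<forall>x\<in>carrier H. \<forall>y\<in>carrier H. \<exists>!\<eta>. \<eta> \<in> N \<and> \<eta> x = y"
    and norm: "\<And>h \<theta>. h \<in> carrier H \<Longrightarrow> \<theta> \<in> N \<Longrightarrow> left_reg H h \<otimes>\<^bsub>BijGroup (carrier H)\<^esub> \<theta>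
                   \<otimes>\<^bsub>BijGroup (carrier H)\<^esub> inv\<^bsub>BijGroup (carrier H)\<^esub> left_reg H h \<in> N"
    using N unfolding regular_normalized_subgroup_def by blast+
  have N_carrier: "N \<subseteq> carrier (BijGroup (carrier H))" using subgroup.subset[OF sub] .
  have "left_reg G g \<otimes>\<^bsub>BijGroup (carrier G)\<^esub> \<eta>
      \<otimes>\<^bsub>BijGroup (carrier G)\<^esub> inv\<^bsub>BijGroup (carrier G)\<^esub> left_reg G g \<in> ?\<tau> ` N"
    if g: "g \<in> carrier G" and \<eta>: "\<eta> \<in> ?\<tau> ` N" for g \<eta>
  proof -
    obtain \<theta> where \<theta>: "\<theta> \<in> N" "\<eta> = ?\<tau> \<theta>" using \<eta> by blast
    have h: "\<phi> g \<in> carrier H" using \<phi> g by (simp add: iso_def hom_def Pi_iff)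
    have l: "left_reg H (\<phi> g) \<in> carrier (BijGroup (carrier H))"
      using group.left_reg_Bij[OF H h] by (simp add: BijGroup_def)
    have "left_reg G g \<otimes>\<^bsub>BijGroup (carrier G)\<^esub> \<eta>
        \<otimes>\<^bsub>BijGroup (carrier G)\<^esub> inv\<^bsub>BijGroup (carrier G)\<^esub> left_reg G g
      = ?\<tau> (left_reg H (\<phi> g) \<otimes>\<^bsub>BijGroup (carrier H)\<^esub> \<theta>
        \<otimes>\<^bsub>BijGroup (carrier H)\<^esub> inv\<^bsub>BijGroup (carrier H)\<^esub> left_reg H (\<phi> g))"
      using left_reg_bij_transfer[OF G \<phi> g] \<theta> l N_carrier by auto
    then show ?thesis using norm[OF h \<theta>(1)] by simp
  qed
  moreover have "subgroup (?\<tau> ` N) (BijGroup (carrier G))"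
    using \<tau>.subgroup_img_is_subgroup[OF sub] .
  moreover have "\<forall>x\<in>carrier G. \<forall>y\<in>carrier G. \<exists>!\<eta>. \<eta> \<in> ?\<tau> ` N \<and> \<eta> x = y"
    using bij_transfer_regular[OF bij _ reg] N_carrier by (simp add: BijGroup_def)
  ultimately show ?thesis unfolding regular_normalized_subgroup_def by blast
qed

theorem proposition5p1:
  fixes B :: "'b set" and Ops :: "('b \<Rightarrow> 'b \<Rightarrow> 'b) set"
    and circ star :: "'b \<Rightarrow> 'b \<Rightarrow> 'b"
    and L :: "('a, 'c) ring_scheme" and K :: "'a set"
  assumes "brace_block B Ops" and "finite B"
    and "circ \<in> Ops" and "star \<in> Ops"
    and "galois_ext L K"
    and "Gal L K \<cong> op_group B circ"
  shows "has_HGS_of_type L K (op_group B star)"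
proof -
  have brace: "skew_left_brace B star circ"
    using assms(1,3,4) unfolding brace_block_def by blast
  then have C: "group (op_group B circ)" and D: "group (op_group B star)"
    by (simp_all add: skew_left_brace_def)
  obtain \<phi> where \<phi>: "\<phi> \<in> iso (Gal L K) (op_group B circ)"
    using assms(6) unfolding is_iso_def by blast
  have Gal: "monoid (Gal L K)"
    using assms(5) monoid_Gal field.is_ring subfieldE(3) unfolding galois_ext_def by blast
  let ?N = "left_reg (op_group B star) ` B"
  let ?N' = "bij_transfer (carrier (Gal L K)) \<phi> ` ?N"
  have N: "regular_normalized_subgroup (op_group B circ) ?N"
    using skew_left_brace_regular_normalized_subgroup[OF brace] .
  have "BijGroup (carrier (Gal L K))\<lparr>carrier := ?N'\<rparr> \<cong> BijGroup B\<lparr>carrier := ?N\<rparr>"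
    using BijGroup_subgroup_bij_transfer_iso \<phi> N
    unfolding iso_def regular_normalized_subgroup_def by fastforce
  also have "\<dots> \<cong> op_group B star"
    using group.Cayley_iso[OF D] by simp
  finally have "BijGroup (carrier (Gal L K))\<lparr>carrier := ?N'\<rparr> \<cong> op_group B star" .
  moreover have "regular_normalized_subgroup (Gal L K) ?N'"
    using regular_normalized_subgroup_bij_transfer[OF Gal C \<phi> N] .
  ultimately show ?thesis unfolding has_HGS_of_type_def by blast
qed

end
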